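(* Let $(k_i)_{i\in\mathbb N}\subset\mathbb N$ satisfy $k_{2i}>1$ for infinitely many $i$ and $k_{2i-1}>1$ for infinitely many $i$, and let $\xi\in(0,1)$. If $\vec\xi=(\xi,\xi,\xi)$ does not belong to $W^s(\vec0)+\mathbb Z^3$, then $e^{2\pi i\xi}$ is not a continuous eigenvalue of the corresponding interval translation map (equivalently of its subshift $(X,\sigma)$).
   Context: For $0<\beta\le\alpha\le 1$ let $T_{\alpha,\beta}(x)=x+\alpha$ on $[0,1-\alpha)$, $x+\beta$ on $[1-\alpha,1-\beta)$, $x-1+\beta$ on $[1-\beta,1]$. With $U=\{0<\beta\le\alpha\le1\}$ and $G(\alpha,\beta)=(\beta/\alpha,(\beta-1)/\alpha+\lfloor1/\alpha\rfloor)$, the map is of infinite type if $G^n(\alpha,\beta)\in U^\circ$ for all $n\ge 0$; infinite type maps correspond bijectively to coding sequences $k_i=\lfloor1/\alpha_i\rfloor$, $(\alpha_i,\beta_i)=G^{i-1}(\alpha,\beta)$, which are exactly the sequences in the claim. For $k\in\mathbb N$ let $\chi_k$ be the substitution $1\mapsto2$, $2\mapsto31^k$, $3\mapsto31^{k-1}$, let $\rho=\lim_i\chi_{k_1}\circ\cdots\circ\chi_{k_i}(3)$ and $X$ the closure of the shift orbit of $\rho$; $(X,\sigma)$ is isomorphic to $T_{\alpha,\beta}$ on its Cantor attractor. Let $A_k=\begin{pmatrix}0&k&k-1\\1&0&0\\0&1&1\end{pmatrix}$ act on row vectors, $Q^-=\{x:x_1,x_2\ge0\ge x_3\}$, and let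 $W^s(\vec0)$ be the linear span of $\bigcap_{n\ge1}\{\vec x : \vec xA_{k_1}\cdots A_{k_n}\in Q^-\}$. A continuous eigenvalue $e^{2\pi i\xi}$ means there is a nonzero continuous $f:X\to\mathbb C$ with $f\circ\sigma=e^{2\pi i\xi}f$. *)

theory Defs
  imports "HOL-Analysis.Analysis"
begin

text \<open>Letters of the alphabet are the naturals 1, 2, 3. Coding sequences k are indexed from 1
  (the value k 0 is irrelevant).\<close>

fun chi :: "nat \<Rightarrow> nat \<Rightarrow> nat list" where
  "chi k a = (if a = 1 then [2]
              else if a = 2 then 3 # replicate k 1
              else if a = 3 then 3 # replicate (k - 1) 1
              else [])"

definition subst_word :: "nat \<Rightarrow> nat list \<Rightarrow> nat list" where
  "subst_word k w = concat (map (chi k) w)"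

fun comp_subst :: "(nat \<Rightarrow> nat) \<Rightarrow> nat \<Rightarrow> nat list \<Rightarrow> nat list" where
  "comp_subst k 0 w = w"
| "comp_subst k (Suc n) w = comp_subst k n (subst_word (k (Suc n)) w)"

text \<open>The limit word rho = lim_n chi_{k 1} o ... o chi_{k n} (3): its i-th letter is read off
  from the first approximant long enough (the approximants are successive prefixes).\<close>
definition rho :: "(nat \<Rightarrow> nat) \<Rightarrow> nat \<Rightarrow> nat" where
  "rho k i = comp_subst k (LEAST n. i < length (comp_subst k n [3])) [3] ! i"

definition shift :: "(nat \<Rightarrow> nat) \<Rightarrow> nat \<Rightarrow> nat" where
  "shift x = (\<lambda>i. x (Suc i))"

definition subshiftX :: "(nat \<Rightarrow> nat) \<Rightarrow> (nat \<Rightarrow> nat) set" where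
  "subshiftX k = closure (range (\<lambda>n. (shift ^^ n) (rho k)))"

definition continuous_eigenvalue ::
  "(nat \<Rightarrow> nat) set \<Rightarrow> ((nat \<Rightarrow> nat) \<Rightarrow> (nat \<Rightarrow> nat)) \<Rightarrow> complex \<Rightarrow> bool" where
  "continuous_eigenvalue X T c \<longleftrightarrow>
     (\<exists>f :: (nat \<Rightarrow> nat) \<Rightarrow> complex. continuous_on X f \<and> (\<exists>x\<in>X. f x \<noteq> 0) \<and>
        (\<forall>x\<in>X. f (T x) = c * f x))"

text \<open>The matrix A_k (acting on row vectors).\<close>
definition Amat :: "nat \<Rightarrow> real^3^3" where
  "Amat k = vector [vector [0, real k, real k - 1], vector [1, 0, 0], vector [0, 1, 1]]"

fun prodA :: "(nat \<Rightarrow> nat) \<Rightarrow> nat \<Rightarrow> real^3^3" where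
  "prodA k 0 = mat 1"
| "prodA k (Suc n) = prodA k n ** Amat (k (Suc n))"

definition Qminus :: "(real^3) set" where
  "Qminus = {x. x$1 \<ge> 0 \<and> x$2 \<ge> 0 \<and> x$3 \<le> 0}"

definition Ws :: "(nat \<Rightarrow> nat) \<Rightarrow> (real^3) set" where
  "Ws k = span (\<Inter>n\<in>{1..}. {x. x v* prodA k n \<in> Qminus})"

end

theory Submission
  imports Defs
begin

text \<open>Let \<open>\<sigma>\<^sub>n = \<chi>\<^sub>k\<^sub>1 \<circ> \<dots> \<circ> \<chi>\<^sub>k\<^sub>n\<close>. A continuous eigenfunction is uniformly continuous on the
  compact subshift, so \<open>e\<^sup>2\<^sup>\<pi>\<^sup>i\<^sup>\<xi>\<^sup>h\<close> is close to \<open>1\<close> whenever \<open>\<rho>\<close> contains two long identical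
  windows at distance \<open>h\<close>. The parity hypothesis makes every letter occur, followed by another
  letter, in the words of every level; as all \<open>\<sigma>\<^sub>n\<^sub>+\<^sub>2\<close>-images of letters begin with \<open>\<sigma>\<^sub>n(3)\<close>,
  this makes \<open>|\<sigma>\<^sub>n(2)|\<close>, \<open>|\<sigma>\<^sub>n(3)|\<close> and \<open>i |\<sigma>\<^sub>n(1)|\<close> for \<open>i \<le> k\<^sub>n\<^sub>+\<^sub>1\<close> such distances, for
  windows of unbounded length. These lengths are the entries of \<open>(1,1,1) A\<^sub>k\<^sub>1 \<cdots> A\<^sub>k\<^sub>n\<close>, so the
  distances of the entries of \<open>\<xi>(1,1,1) A\<^sub>k\<^sub>1 \<cdots> A\<^sub>k\<^sub>n\<close> to \<open>\<int>\<close> tend to \<open>0\<close>, fast enough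
  for the rounding errors to obey the same recursion from some \<open>n\<close> on. An \<open>A\<close>-orbit tending to
  \<open>0\<close> stays in \<open>Q\<^sup>-\<close> or in \<open>-Q\<^sup>-\<close>, so \<open>\<xi>(1,1,1) \<in> W\<^sup>s(0) + \<int>\<^sup>3\<close>.\<close>

section \<open>Words of the substitutions\<close>

lemma subst_word_Nil [simp]: "subst_word k [] = []"
  by (simp add: subst_word_def)

lemma subst_word_Cons [simp]: "subst_word k (a # w) = chi k a @ subst_word k w"
  by (simp add: subst_word_def)

lemma subst_word_append [simp]: "subst_word k (u @ v) = subst_word k u @ subst_word k v"
  by (simp add: subst_word_def)

declare chi.simps [simp del]

lemma chi_1 [simp]: "chi k 1 = [2]" "chi k (Suc 0) = [2]"
  by (simp_all add: chi.simps)

lemma chi_2 [simp]: "chi k 2 = 3 # replicate k 1"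
  by (simp add: chi.simps)

lemma chi_3 [simp]: "chi k 3 = 3 # replicate (k - 1) 1"
  by (simp add: chi.simps)

lemma chi_letters: "set (chi k a) \<subseteq> {1, 2, 3}"
  by (auto simp: chi.simps)

lemma chi_nonempty: "a \<in> {1, 2, 3} \<Longrightarrow> chi k a \<noteq> []"
  by (auto simp: chi.simps)

lemma subst_word_letters: "set (subst_word k w) \<subseteq> {1, 2, 3}"
  using chi_letters by (auto simp: subst_word_def)

lemma length_subst_word_ge: "set w \<subseteq> {1, 2, 3} \<Longrightarrow> length w \<le> length (subst_word k w)"
proof (induction w)
  case (Cons a w)
  then have "chi k a \<noteq> []"
    by (intro chi_nonempty) simp
  with Cons show ?case
    by (cases "chi k a") auto
qed simp

lemma comp_subst_Nil [simp]: "comp_subst k n [] = []"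
  by (induction n) auto

lemma comp_subst_append: "comp_subst k n (u @ v) = comp_subst k n u @ comp_subst k n v"
  by (induction n arbitrary: u v) auto

lemma comp_subst_Cons: "comp_subst k n (a # w) = comp_subst k n [a] @ comp_subst k n w"
  using comp_subst_append[of k n "[a]" w] by simp

lemma comp_subst_replicate:
  "comp_subst k n (replicate r a) = concat (replicate r (comp_subst k n [a]))"
proof (induction r)
  case (Suc r)
  then show ?case
    using comp_subst_Cons[of k n a "replicate r a"] by simp
qed simp

lemma comp_subst_3_ones:
  "comp_subst k n (3 # replicate r 1 @ w) =
     comp_subst k n [3] @ concat (replicate r (comp_subst k n [1])) @ comp_subst k n w"
  using comp_subst_Cons[of k n 3 "replicate r 1 @ w"]
  by (simp add: comp_subst_append comp_subst_replicate)

lemma comp_subst_letters: "set w \<subseteq> {1, 2, 3} \<Longrightarrow> set (comp_subst k n w) \<subseteq> {1, 2, 3}"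
  by (induction n arbitrary: w) (use subst_word_letters in auto)

lemma length_comp_subst_ge:
  "set w \<subseteq> {1, 2, 3} \<Longrightarrow> length w \<le> length (comp_subst k n w)"
proof (induction n arbitrary: w)
  case (Suc n)
  have "length w \<le> length (subst_word (k (Suc n)) w)"
    using Suc.prems by (rule length_subst_word_ge)
  also have "\<dots> \<le> length (comp_subst k (Suc n) w)"
    using Suc.IH[OF subst_word_letters] by simp
  finally show ?case .
qed simp

lemma comp_subst_Suc_shift:
  "comp_subst k (Suc n) w = subst_word (k 1) (comp_subst (\<lambda>i. k (Suc i)) n w)"
  by (induction n arbitrary: w) auto

lemma comp_subst_Suc_3:
  "comp_subst k (Suc n) [3] = comp_subst k n [3] @ concat (replicate (k (Suc n) - 1) (comp_subst k n [1]))"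
  using comp_subst_3_ones[of k n "k (Suc n) - 1" "[]"] by simp

lemma length_comp_subst_Suc:
  "length (comp_subst k (Suc n) [1]) = length (comp_subst k n [2])"
  "length (comp_subst k (Suc n) [2]) =
     length (comp_subst k n [3]) + k (Suc n) * length (comp_subst k n [1])"
  "length (comp_subst k (Suc n) [3]) =
     length (comp_subst k n [3]) + (k (Suc n) - 1) * length (comp_subst k n [1])"
  using comp_subst_3_ones[of k n "k (Suc n)" "[]"] comp_subst_Suc_3[of k n]
  by (simp_all add: length_concat sum_list_replicate)

lemma comp_subst_3_prefix: "n \<le> N \<Longrightarrow> \<exists>r. comp_subst k N [3] = comp_subst k n [3] @ r"
proof (induction N rule: dec_induct)
  case (step N)
  then show ?case
    using comp_subst_Suc_3[of k N] by (metis append.assoc)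
qed simp

lemma length_comp_subst_3_mono:
  "n \<le> N \<Longrightarrow> length (comp_subst k n [3]) \<le> length (comp_subst k N [3])"
  using comp_subst_3_prefix[of n N k] by auto

lemma length_comp_subst_3_unbounded:
  assumes "\<forall>n. \<exists>p>n. 2 \<le> k p"
  shows "\<exists>n. L \<le> length (comp_subst k n [3])"
proof (induction L)
  case (Suc L)
  then obtain n where n: "L \<le> length (comp_subst k n [3])"
    by blast
  obtain q where q: "n \<le> q" "2 \<le> k (Suc q)"
    using assms by (metis Suc_le_eq less_imp_Suc_add le_add1)
  have "1 \<le> length (comp_subst k q [1])"
    using length_comp_subst_ge[of "[1]" k q] by simp
  with q(2) have "0 < (k (Suc q) - 1) * length (comp_subst k q [1])"
    by (intro mult_pos_pos) auto
  then have "length (comp_subst k q [3]) < length (comp_subst k (Suc q) [3])"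
    unfolding length_comp_subst_Suc(3) by linarith
  moreover have "length (comp_subst k n [3]) \<le> length (comp_subst k q [3])"
    using q(1) by (rule length_comp_subst_3_mono)
  ultimately show ?case
    using n by (intro exI[of _ "Suc q"]) linarith
qed simp

text \<open>\<open>\<chi>\<^sub>K (\<chi>\<^sub>K\<^sub>' a)\<close> begins with \<open>3\<close> for every letter \<open>a\<close>.\<close>
lemma comp_subst_Suc_Suc_prefix:
  assumes "a \<in> {1, 2, 3}"
  shows "\<exists>r. comp_subst k (Suc (Suc n)) (a # w) = comp_subst k n [3] @ r"
proof -
  obtain r where "subst_word (k (Suc n)) (subst_word (k (Suc (Suc n))) (a # w)) = 3 # r"
    using assms by auto
  then have "comp_subst k (Suc (Suc n)) (a # w) = comp_subst k n (3 # r)"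
    by simp
  then show ?thesis
    by (metis comp_subst_Cons)
qed

lemma rho_eq_nth:
  assumes "i < length (comp_subst k N [3])"
  shows "rho k i = comp_subst k N [3] ! i"
proof -
  define n where "n = (LEAST n. i < length (comp_subst k n [3]))"
  have i_less: "i < length (comp_subst k n [3])"
    unfolding n_def by (rule LeastI) (rule assms)
  have "n \<le> N"
    unfolding n_def by (rule Least_le) (rule assms)
  then obtain r where "comp_subst k N [3] = comp_subst k n [3] @ r"
    using comp_subst_3_prefix by blast
  then show ?thesis
    using i_less by (simp add: rho_def n_def[symmetric] nth_append)
qed

lemma rho_letters:
  assumes "\<forall>n. \<exists>p>n. 2 \<le> k p"
  shows "rho k i \<in> {1, 2, 3}"
proof -
  obtain N where N: "Suc i \<le> length (comp_subst k N [3])"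
    using length_comp_subst_3_unbounded[OF assms] by blast
  then have "rho k i \<in> set (comp_subst k N [3])"
    by (simp add: rho_eq_nth[of i k N])
  then show ?thesis
    using comp_subst_letters[of "[3]" k N] by auto
qed

declare comp_subst.simps(2) [simp del]

section \<open>Return times in \<open>\<rho>\<close>\<close>

definition rho_reads :: "(nat \<Rightarrow> nat) \<Rightarrow> nat \<Rightarrow> nat list \<Rightarrow> bool" where
  "rho_reads k P v \<longleftrightarrow> (\<forall>s<length v. rho k (P + s) = v ! s)"

lemma rho_reads_append:
  "rho_reads k P (u @ v) \<longleftrightarrow> rho_reads k P u \<and> rho_reads k (P + length u) v"
proof
  assume uv: "rho_reads k P (u @ v)"
  show "rho_reads k P u \<and> rho_reads k (P + length u) v"
    unfolding rho_reads_def
  proof (intro conjI allI impI)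
    fix s
    assume "s < length u"
    then show "rho k (P + s) = u ! s"
      using uv[unfolded rho_reads_def, rule_format, of s] by (simp add: nth_append)
  next
    fix s
    assume "s < length v"
    then show "rho k (P + length u + s) = v ! s"
      using uv[unfolded rho_reads_def, rule_format, of "length u + s"] by (simp add: add.assoc)
  qed
next
  assume "rho_reads k P u \<and> rho_reads k (P + length u) v"
  then show "rho_reads k P (u @ v)"
    unfolding rho_reads_def
    by (metis add.assoc le_add_diff_inverse length_append nat_add_left_cancel_less not_less nth_append)
qed

lemma rho_reads_concat_replicate:
  assumes "rho_reads k P (concat (replicate K u) @ w)" and "i \<le> K"
  shows "rho_reads k (P + i * length u) (concat (replicate (K - i) u) @ w)"
proof -
  have "concat (replicate K u) = concat (replicate i u) @ concat (replicate (K - i) u)"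
    using assms(2) by (metis concat_append le_add_diff_inverse replicate_add)
  with assms(1) show ?thesis
    by (simp add: rho_reads_append length_concat sum_list_replicate)
qed

definition factor_at_level :: "(nat \<Rightarrow> nat) \<Rightarrow> nat \<Rightarrow> nat list \<Rightarrow> bool" where
  "factor_at_level k m u \<longleftrightarrow> (\<exists>N p s. comp_subst (\<lambda>i. k (i + m)) N [3] = p @ u @ s)"

lemma factor_at_level_letters:
  assumes "factor_at_level k m u"
  shows "set u \<subseteq> {1, 2, 3}"
proof -
  obtain N p s where N: "comp_subst (\<lambda>i. k (i + m)) N [3] = p @ u @ s"
    using assms by (auto simp: factor_at_level_def)
  have "set (comp_subst (\<lambda>i. k (i + m)) N [3]) \<subseteq> {1, 2, 3}"
    by (rule comp_subst_letters) simp
  then show ?thesis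
    unfolding N by simp
qed

lemma factor_at_level_infix: "factor_at_level k m (p @ u @ s) \<Longrightarrow> factor_at_level k m u"
  unfolding factor_at_level_def by (metis append.assoc)

lemma factor_at_level_subst_word:
  assumes "factor_at_level k (Suc m) u"
  shows "factor_at_level k m (subst_word (k (Suc m)) u)"
proof -
  obtain N p s where "comp_subst (\<lambda>i. k (i + Suc m)) N [3] = p @ u @ s"
    using assms by (auto simp: factor_at_level_def)
  moreover have "comp_subst (\<lambda>i. k (i + m)) (Suc N) [3] =
      subst_word (k (Suc m)) (comp_subst (\<lambda>i. k (i + Suc m)) N [3])"
    by (simp only: comp_subst_Suc_shift) simp
  ultimately have "comp_subst (\<lambda>i. k (i + m)) (Suc N) [3] =
      subst_word (k (Suc m)) p @ subst_word (k (Suc m)) u @ subst_word (k (Suc m)) s"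
    by simp
  then show ?thesis
    unfolding factor_at_level_def by blast
qed

lemma factor_at_level_comp_subst: "factor_at_level k m u \<Longrightarrow> factor_at_level k 0 (comp_subst k m u)"
  by (induction m arbitrary: u) (auto simp: comp_subst.simps(2) dest: factor_at_level_subst_word)

lemma factor_at_level_rho_reads:
  assumes "factor_at_level k m u"
  shows "\<exists>P. rho_reads k P (comp_subst k m u)"
proof -
  obtain N p s where N: "comp_subst k N [3] = p @ comp_subst k m u @ s"
    using factor_at_level_comp_subst[OF assms] by (auto simp: factor_at_level_def)
  have "rho_reads k (length p) (comp_subst k m u)"
    unfolding rho_reads_def
  proof (intro allI impI)
    fix t
    assume "t < length (comp_subst k m u)"
    then show "rho k (length p + t) = comp_subst k m u ! t"
      using rho_eq_nth[of "length p + t" k N] by (simp add: N nth_append)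
  qed
  then show ?thesis ..
qed

lemma factor_at_level_pair_subst:
  assumes "factor_at_level k (Suc m) [b, y]" and "chi (k (Suc m)) b = p @ a # q"
  shows "\<exists>z. factor_at_level k m [a, z]"
proof -
  have "chi (k (Suc m)) y \<noteq> []"
    using factor_at_level_letters[OF assms(1)] by (intro chi_nonempty) simp
  then obtain z r where zr: "q @ chi (k (Suc m)) y = z # r"
    by (metis Nil_is_append_conv list.exhaust)
  have "factor_at_level k m (p @ [a, z] @ r)"
    using factor_at_level_subst_word[OF assms(1)] assms(2) zr by simp
  then show ?thesis
    using factor_at_level_infix by blast
qed

lemma factor_at_level_3_1:
  assumes "2 \<le> k (Suc m)"
  shows "factor_at_level k m [3, 1]"
proof -
  obtain K where K: "k (Suc m) = Suc (Suc K)"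
    using assms by (metis add_2_eq_Suc le_Suc_ex)
  have "comp_subst (\<lambda>i. k (i + m)) 1 [3] = [] @ [3, 1] @ replicate K 1"
    using K by (simp add: comp_subst.simps(2))
  then show ?thesis
    unfolding factor_at_level_def by blast
qed

lemma large_entry_of_each_parity:
  fixes k :: "nat \<Rightarrow> nat"
  assumes even: "infinite {i. i \<ge> 1 \<and> k (2 * i) > 1}"
    and odd: "infinite {i. i \<ge> 1 \<and> k (2 * i - 1) > 1}"
  shows "\<exists>j. 2 \<le> k (Suc (m + 2 * j))"
proof (cases "even m")
  case True
  obtain i where "m < i" "1 < k (2 * i - 1)"
    using odd unfolding infinite_nat_iff_unbounded by blast
  moreover have "\<exists>j. Suc (m + 2 * j) = 2 * i - 1"
    using True \<open>m < i\<close> by presburger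
  ultimately show ?thesis
    by (metis Suc_leI one_add_one plus_1_eq_Suc)
next
  case False
  obtain i where "m < i" "1 < k (2 * i)"
    using even unfolding infinite_nat_iff_unbounded by blast
  moreover have "\<exists>j. Suc (m + 2 * j) = 2 * i"
    using False \<open>m < i\<close> by presburger
  ultimately show ?thesis
    by (metis Suc_leI one_add_one plus_1_eq_Suc)
qed

lemma large_entries_beyond:
  fixes k :: "nat \<Rightarrow> nat"
  assumes "\<forall>m. \<exists>j. 2 \<le> k (Suc (m + 2 * j))"
  shows "\<forall>n. \<exists>p>n. 2 \<le> k p"
  using assms by (metis le_add1 le_imp_less_Suc)

lemma factor_at_level_3_pair:
  assumes "\<forall>n. \<exists>p>n. 2 \<le> k p"
  shows "\<exists>y. factor_at_level k m [3, y]"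
proof -
  have descend: "\<exists>y. factor_at_level k m [3, y]" if "\<exists>y. factor_at_level k (m + d) [3, y]" for d
    using that
  proof (induction d)
    case (Suc d)
    then obtain y where "factor_at_level k (Suc (m + d)) [3, y]"
      by auto
    moreover have "chi (k (Suc (m + d))) 3 = [] @ 3 # replicate (k (Suc (m + d)) - 1) 1"
      by simp
    ultimately obtain z where "factor_at_level k (m + d) [3, z]"
      using factor_at_level_pair_subst by blast
    then show ?case
      using Suc.IH by blast
  qed simp
  obtain p where "m < p" "2 \<le> k p"
    using assms by blast
  then obtain d where "2 \<le> k (Suc (m + d))"
    by (metis less_imp_Suc_add)
  then show ?thesis
    using descend factor_at_level_3_1 by blast
qed

lemma factor_at_level_1_pair:
  assumes pos: "\<forall>i\<ge>1. 1 \<le> k i" and large: "\<forall>m. \<exists>j. 2 \<le> k (Suc (m + 2 * j))"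
  shows "\<exists>y. factor_at_level k m [1, y]"
proof -
  have descend2: "\<exists>z. factor_at_level k n [1, z]"
    if y: "factor_at_level k (Suc (Suc n)) [1, y]" for n y
  proof -
    have "chi (k (Suc (Suc n))) 1 = [] @ 2 # []"
      by simp
    then obtain y' where y': "factor_at_level k (Suc n) [2, y']"
      using factor_at_level_pair_subst[OF y] by blast
    obtain K where "k (Suc n) = Suc K"
      using pos[rule_format, of "Suc n"] by (cases "k (Suc n)") auto
    then have "chi (k (Suc n)) 2 = [3] @ 1 # replicate K 1"
      by simp
    then show ?thesis
      using factor_at_level_pair_subst[OF y'] by blast
  qed
  have descend: "\<exists>z. factor_at_level k m [1, z]" if "\<exists>y. factor_at_level k (m + 2 * j) [1, y]" for j
    using that
  proof (induction j)
    case (Suc j)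
    then show ?case
      using descend2[of "m + 2 * j"] by auto
  qed simp
  obtain j where j: "2 \<le> k (Suc (m + 2 * j))"
    using large by blast
  obtain y where "factor_at_level k (Suc (m + 2 * j)) [3, y]"
    using factor_at_level_3_pair[OF large_entries_beyond[OF large]] by blast
  moreover obtain K where "k (Suc (m + 2 * j)) = Suc (Suc K)"
    using j by (metis add_2_eq_Suc le_Suc_ex)
  then have "chi (k (Suc (m + 2 * j))) 3 = [3] @ 1 # replicate K 1"
    by simp
  ultimately have "\<exists>z. factor_at_level k (m + 2 * j) [1, z]"
    using factor_at_level_pair_subst by blast
  then show ?thesis
    by (rule descend)
qed

lemma factor_at_level_2_pair:
  assumes "\<forall>i\<ge>1. 1 \<le> k i" and "\<forall>m. \<exists>j. 2 \<le> k (Suc (m + 2 * j))"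
  shows "\<exists>y. factor_at_level k m [2, y]"
proof -
  obtain y where "factor_at_level k (Suc m) [1, y]"
    using factor_at_level_1_pair[OF assms] by blast
  moreover have "chi (k (Suc m)) 1 = [] @ 2 # []"
    by simp
  ultimately show ?thesis
    using factor_at_level_pair_subst by blast
qed


definition return_time :: "(nat \<Rightarrow> nat) \<Rightarrow> nat \<Rightarrow> nat \<Rightarrow> bool" where
  "return_time k L h \<longleftrightarrow> (\<exists>P. \<forall>s<L. rho k (P + s) = rho k (P + h + s))"

lemma return_time_of_rho_reads:
  assumes "rho_reads k P v" and "rho_reads k (P + h) v" and "L \<le> length v"
  shows "return_time k L h"
  using assms unfolding return_time_def rho_reads_def by (metis order_less_le_trans)

lemma return_time_letter_image:
  assumes ay: "factor_at_level k (Suc (Suc m)) [a, y]"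
    and L: "L \<le> length (comp_subst k m [3])"
  shows "return_time k L (length (comp_subst k (Suc (Suc m)) [a]))"
proof -
  let ?w = "\<lambda>b. comp_subst k (Suc (Suc m)) [b]"
  have letters: "a \<in> {1, 2, 3}" "y \<in> {1, 2, 3}"
    using factor_at_level_letters[OF ay] by auto
  obtain P where "rho_reads k P (?w a @ ?w y)"
    using factor_at_level_rho_reads[OF ay] comp_subst_Cons[of k "Suc (Suc m)" a "[y]"] by metis
  then have reads: "rho_reads k P (?w a)" "rho_reads k (P + length (?w a)) (?w y)"
    by (simp_all add: rho_reads_append)
  obtain r r' where "?w a = comp_subst k m [3] @ r" "?w y = comp_subst k m [3] @ r'"
    using comp_subst_Suc_Suc_prefix[of _ k m "[]"] letters by metis
  with reads L show ?thesis
    by (intro return_time_of_rho_reads[where v = "comp_subst k m [3]"]) (auto simp: rho_reads_append)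
qed

text \<open>With \<open>K = k (m + 3)\<close> and \<open>\<sigma> = \<chi>\<^sub>k\<^sub>1 \<circ> \<dots> \<circ> \<chi>\<^sub>k\<^sub>(\<^sub>m\<^sub>+\<^sub>2\<^sub>)\<close>, the image of \<open>2 y\<close> contains
  \<open>\<sigma>(1)\<^sup>K \<sigma>(\<chi>\<^sub>K y)\<close>, and each of these \<open>K + 1\<close> blocks begins with \<open>(\<chi>\<^sub>k\<^sub>1 \<circ> \<dots> \<circ> \<chi>\<^sub>k\<^sub>m)(3)\<close>.\<close>
lemma return_time_multiple:
  assumes y: "factor_at_level k (Suc (Suc (Suc m))) [2, y]"
    and L: "L \<le> length (comp_subst k m [3])"
    and i: "i \<le> k (Suc (Suc (Suc m)))"
  shows "return_time k L (i * length (comp_subst k (Suc (Suc m)) [1]))"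
proof -
  let ?n = "Suc (Suc m)" and ?K = "k (Suc (Suc (Suc m)))"
  let ?\<sigma> = "comp_subst k ?n" and ?c = "chi (k (Suc (Suc (Suc m)))) y"
  have "factor_at_level k ?n (3 # replicate ?K 1 @ ?c)"
    using factor_at_level_subst_word[OF y] by simp
  then obtain P where
    "rho_reads k P (?\<sigma> [3] @ concat (replicate ?K (?\<sigma> [1])) @ ?\<sigma> ?c)"
    using factor_at_level_rho_reads comp_subst_3_ones by metis
  then have P: "rho_reads k (P + length (?\<sigma> [3])) (concat (replicate ?K (?\<sigma> [1])) @ ?\<sigma> ?c)"
    by (simp add: rho_reads_append)
  have "y \<in> {1, 2, 3}"
    using factor_at_level_letters[OF y] by simp
  then have "?c \<noteq> []"
    by (rule chi_nonempty)
  then obtain c0 c' where c: "?c = c0 # c'" "c0 \<in> {1, 2, 3}"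
    using chi_letters[of ?K y] by (cases ?c) auto
  have block: "rho_reads k (P + length (?\<sigma> [3]) + j * length (?\<sigma> [1])) (comp_subst k m [3])"
    if "j \<le> ?K" for j
  proof -
    have reads: "rho_reads k (P + length (?\<sigma> [3]) + j * length (?\<sigma> [1]))
        (concat (replicate (?K - j) (?\<sigma> [1])) @ ?\<sigma> ?c)"
      using rho_reads_concat_replicate[OF P that] .
    obtain r where "concat (replicate (?K - j) (?\<sigma> [1])) @ ?\<sigma> ?c = comp_subst k m [3] @ r"
    proof (cases "?K - j")
      case 0
      then show ?thesis
        using that comp_subst_Suc_Suc_prefix[OF c(2), of k m c'] c(1) by auto
    next
      case (Suc q)
      then show ?thesis
        using that comp_subst_Suc_Suc_prefix[of 1 k m "[]"] by auto
    qed
    with reads show ?thesis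
      by (simp only: rho_reads_append)
  qed
  show ?thesis
    using return_time_of_rho_reads[OF block[of 0] _ L] block[OF i] by (simp add: add.assoc)
qed

section \<open>The subshift and its eigenfunctions\<close>

lemma open_cylinder: "open {y :: nat \<Rightarrow> nat. \<forall>i<L. y i = x i}"
proof -
  have "open {y :: nat \<Rightarrow> nat. \<forall>i\<in>{..<L}. y ((\<lambda>i. i) i) \<in> (\<lambda>i. {x i}) i}"
    by (rule product_topology_basis') (auto intro: open_discrete)
  moreover have "{y :: nat \<Rightarrow> nat. \<forall>i\<in>{..<L}. y ((\<lambda>i. i) i) \<in> (\<lambda>i. {x i}) i} = {y. \<forall>i<L. y i = x i}"
    by auto
  ultimately show ?thesis
    by simp
qed

lemma cylinder_subset_of_open:
  assumes "open (A :: (nat \<Rightarrow> nat) set)" and "x \<in> A"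
  shows "\<exists>L. {y. \<forall>i<L. y i = x i} \<subseteq> A"
proof -
  have "openin (product_topology (\<lambda>i. euclidean) UNIV) A"
    using assms(1) by (simp add: open_fun_def)
  from product_topology_open_contains_basis[OF this assms(2)]
  obtain U where U: "x \<in> (\<Pi>\<^sub>E i\<in>UNIV. U i)" "finite {i. U i \<noteq> UNIV}"
    "(\<Pi>\<^sub>E i\<in>UNIV. U i) \<subseteq> A"
    by auto
  define L where "L = Suc (Max (insert 0 {i. U i \<noteq> UNIV}))"
  have "{y. \<forall>i<L. y i = x i} \<subseteq> (\<Pi>\<^sub>E i\<in>UNIV. U i)"
  proof
    fix y
    assume y: "y \<in> {y. \<forall>i<L. y i = x i}"
    have "y i \<in> U i" for i
    proof (cases "U i = UNIV")
      case False
      then have "i < L"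
        using U(2) by (simp add: L_def le_imp_less_Suc)
      then show ?thesis
        using y U(1) by (auto simp: PiE_iff)
    qed simp
    then show "y \<in> (\<Pi>\<^sub>E i\<in>UNIV. U i)"
      by (simp add: PiE_UNIV_domain)
  qed
  with U(3) show ?thesis
    by blast
qed

lemma continuous_on_cylinder:
  fixes f :: "(nat \<Rightarrow> nat) \<Rightarrow> 'a::metric_space"
  assumes "continuous_on X f" and "x \<in> X" and "0 < e"
  shows "\<exists>L. \<forall>y\<in>X. (\<forall>i<L. y i = x i) \<longrightarrow> dist (f y) (f x) < e"
proof -
  obtain A where A: "open A" "x \<in> A" "\<forall>y\<in>X. y \<in> A \<longrightarrow> f y \<in> ball (f x) e"
    using assms unfolding continuous_on_topological by (metis centre_in_ball open_ball)
  obtain L where "{y. \<forall>i<L. y i = x i} \<subseteq> A"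
    using cylinder_subset_of_open[OF A(1,2)] by blast
  with A(3) show ?thesis
    by (auto simp: dist_commute)
qed

lemma uniformly_continuous_on_cylinders:
  fixes f :: "(nat \<Rightarrow> nat) \<Rightarrow> 'a::metric_space"
  assumes "compact X" and "continuous_on X f" and "0 < e"
  shows "\<exists>L. \<forall>x\<in>X. \<forall>y\<in>X. (\<forall>i<L. x i = y i) \<longrightarrow> dist (f x) (f y) < e"
proof -
  have "\<exists>L. \<forall>y\<in>X. (\<forall>i<L. y i = x i) \<longrightarrow> dist (f y) (f x) < e / 2" if "x \<in> X" for x
    using continuous_on_cylinder[OF assms(2) that, of "e / 2"] assms(3) by simp
  then obtain Lx where Lx: "\<forall>x\<in>X. \<forall>y\<in>X. (\<forall>i<Lx x. y i = x i) \<longrightarrow> dist (f y) (f x) < e / 2"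
    by metis
  have "X \<subseteq> (\<Union>x\<in>X. {y. \<forall>i<Lx x. y i = x i})"
    by auto
  obtain C where C: "C \<subseteq> X" "finite C" "X \<subseteq> (\<Union>x\<in>C. {y. \<forall>i<Lx x. y i = x i})"
    by (rule compactE_image[OF assms(1) open_cylinder \<open>X \<subseteq> _\<close>])
  define L where "L = Max (insert 0 (Lx ` C))"
  have "dist (f x) (f y) < e" if xy: "x \<in> X" "y \<in> X" "\<forall>i<L. x i = y i" for x y
  proof -
    obtain c where c: "c \<in> C" "\<forall>i<Lx c. x i = c i"
      using C(3) xy(1) by blast
    have "Lx c \<le> L"
      unfolding L_def using C(2) c(1) by simp
    then have "\<forall>i<Lx c. y i = c i"
      using c(2) xy(3) by auto
    then have "dist (f y) (f c) < e / 2" "dist (f x) (f c) < e / 2"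
      using Lx C(1) c xy(1,2) by blast+
    then show ?thesis
      using dist_triangle_half_l by blast
  qed
  then show ?thesis
    by blast
qed

lemma shift_power: "(shift ^^ n) x = (\<lambda>i. x (i + n))"
  by (induction n) (auto simp: shift_def)

lemma shift_power_rho_in_subshiftX: "(shift ^^ P) (rho k) \<in> subshiftX k"
  unfolding subshiftX_def by (rule closure_subset[THEN subsetD]) blast

lemma compact_subshiftX:
  assumes "\<forall>n. \<exists>p>n. 2 \<le> k p"
  shows "compact (subshiftX k)"
proof -
  define K where "K = (\<Pi>\<^sub>E i\<in>(UNIV :: nat set). ({1, 2, 3} :: nat set))"
  have "compactin (product_topology (\<lambda>i. euclidean) UNIV) K"
    unfolding K_def compactin_PiE by (simp add: finite_imp_compact)
  then have "compact K"
    by (simp add: euclidean_product_topology)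
  have "closed ({1, 2, 3} :: nat set)"
    unfolding closed_def by (rule open_discrete)
  then have "closedin (product_topology (\<lambda>i. euclidean) UNIV) K"
    unfolding K_def closedin_product_topology closed_closedin by blast
  then have "closed K"
    unfolding closed_closedin euclidean_product_topology .
  have "range (\<lambda>n. (shift ^^ n) (rho k)) \<subseteq> K"
    using rho_letters[OF assms] by (auto simp: K_def shift_power)
  then have "subshiftX k \<subseteq> K"
    unfolding subshiftX_def using \<open>closed K\<close> by (rule closure_minimal)
  with \<open>compact K\<close> show ?thesis
    unfolding subshiftX_def by (metis closed_closure compact_Int_closed inf.absorb_iff2)
qed

lemma abs_diff_round_lt_of_cos_lt:
  fixes x d :: real
  assumes d: "0 < d" "d \<le> 1 / 2" and cos_less: "cos (2 * pi * d) < cos (2 * pi * x)"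
  shows "\<bar>x - round x\<bar> < d"
proof (rule ccontr)
  assume "\<not> ?thesis"
  moreover have "\<bar>x - round x\<bar> \<le> 1 / 2"
    using of_int_round_abs_le[of x] by (simp add: abs_minus_commute)
  ultimately have "cos (2 * pi * \<bar>x - round x\<bar>) \<le> cos (2 * pi * d)"
    using d by (intro cos_monotone_0_pi_le) auto
  moreover have "cos (2 * pi * x) = cos (2 * pi * \<bar>x - round x\<bar>)"
  proof -
    have "cos (2 * pi * x) = cos (2 * pi * (x - round x) + 2 * pi * of_int (round x))"
      by (simp add: algebra_simps)
    also have "\<dots> = cos \<bar>2 * pi * (x - round x)\<bar>"
      by (simp add: cos_add)
    finally show ?thesis
      by (simp add: abs_mult)
  qed
  ultimately show False
    using cos_less by simp
qed

lemma continuous_eigenvalue_subshiftX_orbit: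
  assumes "continuous_eigenvalue (subshiftX k) shift c"
  obtains f where "continuous_on (subshiftX k) f" and "f (rho k) \<noteq> 0"
    and "\<And>P. f ((shift ^^ P) (rho k)) = c ^ P * f (rho k)"
proof -
  obtain f where cont: "continuous_on (subshiftX k) f" and nonzero: "\<exists>x\<in>subshiftX k. f x \<noteq> 0"
    and eigen: "\<forall>x\<in>subshiftX k. f (shift x) = c * f x"
    using assms unfolding continuous_eigenvalue_def by blast
  have f_orbit: "f ((shift ^^ P) (rho k)) = c ^ P * f (rho k)" for P
    by (induction P) (use eigen shift_power_rho_in_subshiftX in auto)
  have "f (rho k) \<noteq> 0"
  proof
    assume "f (rho k) = 0"
    then have "f x = 0" if "x \<in> subshiftX k" for x
      using continuous_constant_on_closure[of "range (\<lambda>P. (shift ^^ P) (rho k))" f 0 x]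
        cont f_orbit that unfolding subshiftX_def by auto
    with nonzero show False
      by blast
  qed
  with cont f_orbit show ?thesis
    using that by blast
qed

text \<open>Since an eigenfunction \<open>f\<close> is uniformly continuous, long common windows in \<open>\<rho>\<close> at distance
  \<open>h\<close> force \<open>f \<circ> \<sigma>\<^sup>h\<close> and \<open>f\<close> to be close, hence \<open>e\<^sup>2\<^sup>\<pi>\<^sup>i\<^sup>\<xi>\<^sup>h\<close> to be close to \<open>1\<close>.\<close>
lemma eigenvalue_return_time_near_integer:
  assumes compact: "compact (subshiftX k)"
    and eigen: "continuous_eigenvalue (subshiftX k) shift (cis (2 * pi * \<xi>))"
    and \<delta>: "0 < \<delta>" "\<delta> \<le> 1 / 2"
  shows "\<exists>L. \<forall>h. return_time k L h \<longrightarrow> \<bar>\<xi> * real h - round (\<xi> * real h)\<bar> < \<delta>"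
proof -
  define c where "c = cis (2 * pi * \<xi>)"
  obtain f where cont: "continuous_on (subshiftX k) f" and f0: "f (rho k) \<noteq> 0"
    and f_orbit: "\<And>P. f ((shift ^^ P) (rho k)) = c ^ P * f (rho k)"
    using continuous_eigenvalue_subshiftX_orbit[OF eigen[folded c_def]] by blast
  have "cos (2 * pi * \<delta>) < 1"
    using cos_monotone_0_pi[of 0 "2 * pi * \<delta>"] \<delta> by simp
  then have "0 < (1 - cos (2 * pi * \<delta>)) * norm (f (rho k))"
    using f0 by simp
  then obtain L where L: "\<forall>x\<in>subshiftX k. \<forall>y\<in>subshiftX k. (\<forall>i<L. x i = y i) \<longrightarrow>
      dist (f x) (f y) < (1 - cos (2 * pi * \<delta>)) * norm (f (rho k))"
    using uniformly_continuous_on_cylinders[OF compact cont] by blast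
  have "\<bar>\<xi> * real h - round (\<xi> * real h)\<bar> < \<delta>" if "return_time k L h" for h
  proof -
    obtain P where "\<forall>s<L. rho k (P + s) = rho k (P + h + s)"
      using \<open>return_time k L h\<close> unfolding return_time_def by blast
    then have "\<forall>i<L. (shift ^^ P) (rho k) i = (shift ^^ (P + h)) (rho k) i"
      by (simp add: shift_power add.commute add.left_commute)
    then have close: "dist (f ((shift ^^ P) (rho k))) (f ((shift ^^ (P + h)) (rho k)))
        < (1 - cos (2 * pi * \<delta>)) * norm (f (rho k))"
      using L shift_power_rho_in_subshiftX by blast
    have "f ((shift ^^ P) (rho k)) - f ((shift ^^ (P + h)) (rho k)) = c ^ P * ((1 - c ^ h) * f (rho k))"
      by (simp add: f_orbit power_add algebra_simps)
    then have "dist (f ((shift ^^ P) (rho k))) (f ((shift ^^ (P + h)) (rho k)))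
        = norm (c ^ h - 1) * norm (f (rho k))"
      by (simp add: dist_norm norm_mult norm_power c_def norm_minus_commute)
    with close f0 have "norm (c ^ h - 1) < 1 - cos (2 * pi * \<delta>)"
      by simp
    moreover have "1 - cos (2 * pi * (\<xi> * real h)) \<le> norm (c ^ h - 1)"
      using abs_Re_le_cmod[of "c ^ h - 1"] by (simp add: c_def Complex.DeMoivre mult_ac)
    ultimately have "cos (2 * pi * \<delta>) < cos (2 * pi * (\<xi> * real h))"
      by linarith
    then show ?thesis
      by (rule abs_diff_round_lt_of_cos_lt[OF \<delta>])
  qed
  then show ?thesis
    by blast
qed

lemma abs_diff_round_multiples:
  fixes x \<delta> :: real
  assumes \<delta>: "\<delta> \<le> 1 / 4" and K: "1 \<le> K"
    and near: "\<forall>i\<le>K. \<bar>real i * x - round (real i * x)\<bar> < \<delta>"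
  shows "\<forall>i\<le>K. \<bar>real i * (x - round x)\<bar> < \<delta>"
proof (intro allI impI)
  have x: "\<bar>x - round x\<bar> < \<delta>"
    using near K by force
  fix i
  assume "i \<le> K"
  then show "\<bar>real i * (x - round x)\<bar> < \<delta>"
  proof (induction i)
    case (Suc i)
    define m where "m = round (real (Suc i) * x) - int (Suc i) * round x"
    have "real (Suc i) * x - round (real (Suc i) * x) = real (Suc i) * (x - round x) - of_int m"
      unfolding m_def by (simp add: algebra_simps)
    moreover have "\<bar>real (Suc i) * x - round (real (Suc i) * x)\<bar> < \<delta>"
      using near Suc.prems by blast
    moreover have "\<bar>real (Suc i) * (x - round x)\<bar> < 2 * \<delta>"
      using Suc x by (simp add: algebra_simps)
    ultimately have "\<bar>real_of_int m\<bar> < 1" and "m = 0 \<longrightarrow> ?case"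
      using \<delta> by auto
    then show ?case
      by linarith
  qed (use x in \<open>simp add: abs_less_iff\<close>)
qed

section \<open>Orbits of the matrices \<open>A\<^sub>k\<close>\<close>

lemma vector_matrix_mult_Amat [simp]:
  fixes x :: "real^3"
  shows "(x v* Amat K) $ 1 = x $ 2"
    and "(x v* Amat K) $ 2 = real K * x $ 1 + x $ 3"
    and "(x v* Amat K) $ 3 = (real K - 1) * x $ 1 + x $ 3"
  by (simp_all add: vector_matrix_mult_def Amat_def sum_3)

lemma uminus_vector_matrix_mult: "(- x) v* A = - (x v* A)"
  for x :: "'a::ring_1^'m"
  by (simp add: vec_eq_iff vector_matrix_mult_def sum_negf)

lemma vector_matrix_mult_prodA_Suc:
  "x v* prodA k (Suc n) = (x v* prodA k n) v* Amat (k (Suc n))"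
  by (simp add: vector_matrix_mul_assoc)

declare prodA.simps(2) [simp del]

lemma Qminus_iff: "x \<in> Qminus \<longleftrightarrow> 0 \<le> x $ 1 \<and> 0 \<le> x $ 2 \<and> x $ 3 \<le> 0"
  by (auto simp: Qminus_def)

lemma Amat_orbit_Qminus_backward:
  fixes y :: "nat \<Rightarrow> real^3"
  assumes \<kappa>: "\<And>n. 1 \<le> \<kappa> n" and orbit: "\<And>n. y (Suc n) = y n v* Amat (\<kappa> n)"
    and "y (m + d) \<in> Qminus"
  shows "y m \<in> Qminus"
  using assms(3)
proof (induction d arbitrary: m)
  case (Suc d)
  then have Q: "y (Suc m) \<in> Qminus"
    by (metis add_Suc_shift)
  have y1: "y m $ 1 = y (Suc m) $ 2 - y (Suc m) $ 3"
    by (simp add: orbit algebra_simps)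
  with Q have "0 \<le> y m $ 1"
    by (simp add: Qminus_iff)
  moreover have "0 \<le> (real (\<kappa> m) - 1) * y m $ 1"
    using \<kappa>[of m] \<open>0 \<le> y m $ 1\<close> by simp
  ultimately show ?case
    using Q by (simp add: Qminus_iff orbit)
qed simp

lemma Amat_orbit_nonneg_imp_zero:
  fixes y :: "nat \<Rightarrow> real^3"
  assumes \<kappa>: "\<And>n. 1 \<le> \<kappa> n" and orbit: "\<And>n. y (Suc n) = y n v* Amat (\<kappa> n)"
    and lim: "y \<longlonglongrightarrow> 0" and nonneg: "\<forall>j. 0 \<le> y n $ j"
  shows "y n = 0"
proof -
  define S where "S m = y m $ 1 + y m $ 2 + y m $ 3" for m
  have "(\<forall>j. 0 \<le> y (n + d) $ j) \<and> S n \<le> S (n + d)" for d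
  proof (induction d)
    case (Suc d)
    let ?m = "n + d"
    have "0 \<le> (real (\<kappa> ?m) - 1) * y ?m $ 1"
      using \<kappa>[of ?m] Suc by simp
    with Suc show ?case
      by (simp add: S_def orbit forall_3 algebra_simps)
  qed (use nonneg in simp)
  moreover have "S \<longlonglongrightarrow> 0"
    unfolding S_def using tendsto_add[OF tendsto_add] tendsto_vec_nth[OF lim] by fastforce
  ultimately have "S n \<le> 0"
    by (metis LIMSEQ_le_const le_Suc_ex)
  then show ?thesis
    using nonneg by (simp add: S_def vec_eq_iff forall_3)
qed

lemma Amat_orbit_alternating_two_steps:
  fixes y :: "nat \<Rightarrow> real^3"
  assumes \<kappa>: "\<And>n. 1 \<le> \<kappa> n" and orbit: "\<And>n. y (Suc n) = y n v* Amat (\<kappa> n)"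
    and sign: "\<And>m. n \<le> m \<Longrightarrow> y m $ 1 * y m $ 2 < 0"
  shows "\<bar>y n $ 1\<bar> + \<bar>y n $ 2\<bar> \<le> \<bar>y (Suc (Suc n)) $ 1\<bar> + \<bar>y (Suc (Suc n)) $ 2\<bar>"
proof -
  have first: "y (Suc n) $ 1 = y n $ 2" "y (Suc (Suc n)) $ 1 = y (Suc n) $ 2"
    by (simp_all only: orbit vector_matrix_mult_Amat)
  define p q u v where "p = y n $ 1" and "q = y n $ 2" and "u = y (Suc n) $ 2"
    and "v = y (Suc (Suc n)) $ 2"
  have pq: "p * q < 0" and qu: "q * u < 0" and uv: "u * v < 0"
    using sign[of n] sign[of "Suc n"] sign[of "Suc (Suc n)"] first
    unfolding p_def q_def u_def v_def by simp_all
  have v: "v = u - p + real (\<kappa> (Suc n)) * q"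
    by (simp add: p_def q_def u_def v_def orbit algebra_simps)
  have \<kappa>1: "1 \<le> real (\<kappa> (Suc n))"
    using \<kappa>[of "Suc n"] by simp
  have "\<bar>p\<bar> + \<bar>q\<bar> \<le> \<bar>u\<bar> + \<bar>v\<bar>"
  proof (cases "0 < p")
    case True
    with pq qu uv have "q < 0" "0 < u" "v < 0"
      by (auto simp: mult_less_0_iff)
    moreover have "real (\<kappa> (Suc n)) * q \<le> q"
      using \<kappa>1 \<open>q < 0\<close> by (simp add: mult_le_cancel_right1)
    ultimately show ?thesis
      using True v by simp
  next
    case False
    with pq qu uv have "p < 0" "0 < q" "u < 0" "0 < v"
      by (auto simp: mult_less_0_iff)
    moreover have "q \<le> real (\<kappa> (Suc n)) * q"
      using \<kappa>1 \<open>0 < q\<close> by (simp add: mult_le_cancel_right1)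
    ultimately show ?thesis
      using v by simp
  qed
  then show ?thesis
    using first by (simp add: p_def q_def u_def v_def)
qed

lemma Amat_orbit_alternating_not_tendsto_zero:
  fixes y :: "nat \<Rightarrow> real^3"
  assumes \<kappa>: "\<And>n. 1 \<le> \<kappa> n" and orbit: "\<And>n. y (Suc n) = y n v* Amat (\<kappa> n)"
    and lim: "y \<longlonglongrightarrow> 0" and alternating: "\<forall>n\<ge>N. y n $ 1 * y n $ 2 < 0"
  shows False
proof -
  define T where "T m = \<bar>y m $ 1\<bar> + \<bar>y m $ 2\<bar>" for m
  have T_mono: "T N \<le> T (N + 2 * j)" for j
  proof (induction j)
    case (Suc j)
    have "T (N + 2 * j) \<le> T (Suc (Suc (N + 2 * j)))"
      unfolding T_def using alternating
      by (intro Amat_orbit_alternating_two_steps[where y = y, OF \<kappa> orbit]) auto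
    with Suc show ?case
      by simp
  qed simp
  have "0 < T N"
    using alternating unfolding T_def by (cases "y N $ 1 = 0") auto
  have "(\<lambda>m. y m $ i) \<longlonglongrightarrow> 0" for i
    using tendsto_vec_nth[OF lim, of i] by simp
  then have "T \<longlonglongrightarrow> 0 + 0"
    unfolding T_def by (intro tendsto_add tendsto_rabs_zero)
  then obtain M where "\<forall>m\<ge>M. T m < T N"
    using order_tendstoD(2)[of T 0 sequentially "T N"] \<open>0 < T N\<close>
    by (auto simp: eventually_sequentially)
  then have "T (N + 2 * M) < T N"
    by simp
  with T_mono[of M] show False
    by simp
qed

text \<open>A point outside \<open>Q\<^sup>- \<union> -Q\<^sup>-\<close> with \<open>y\<^sub>1 y\<^sub>2 \<ge> 0\<close> is, up to sign, a nonzero nonnegative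
  vector, and these never lie on an orbit tending to \<open>0\<close>.\<close>
lemma Amat_orbit_tendsto_zero_Qminus_or_neg:
  fixes y :: "nat \<Rightarrow> real^3"
  assumes \<kappa>: "\<And>n. 1 \<le> \<kappa> n" and orbit: "\<And>n. y (Suc n) = y n v* Amat (\<kappa> n)"
    and lim: "y \<longlonglongrightarrow> 0" and "0 \<le> y n $ 1 * y n $ 2"
  shows "y n \<in> Qminus \<or> - y n \<in> Qminus"
proof (cases "0 \<le> y n $ 1 \<and> 0 \<le> y n $ 2")
  case True
  then have "0 \<le> y n $ 3 \<Longrightarrow> y n = 0"
    by (intro Amat_orbit_nonneg_imp_zero[where y = y, OF \<kappa> orbit lim]) (auto simp: forall_3)
  then show ?thesis
    using True by (force simp: Qminus_iff)
next
  case False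
  with assms(4) have neg: "y n $ 1 \<le> 0" "y n $ 2 \<le> 0"
    by (auto simp: zero_le_mult_iff)
  have "- y (Suc m) = (- y m) v* Amat (\<kappa> m)" for m
    by (simp add: orbit uminus_vector_matrix_mult)
  moreover have "(\<lambda>m. - y m) \<longlonglongrightarrow> 0"
    using tendsto_minus[OF lim] by simp
  ultimately have "y n $ 3 \<le> 0 \<Longrightarrow> - y n = 0"
    using neg by (intro Amat_orbit_nonneg_imp_zero[where y = "\<lambda>m. - y m", OF \<kappa>]) (auto simp: forall_3)
  then show ?thesis
    using neg by (force simp: Qminus_iff)
qed

lemma Amat_orbit_tendsto_zero_Qminus:
  fixes y :: "nat \<Rightarrow> real^3"
  assumes \<kappa>: "\<And>n. 1 \<le> \<kappa> n" and orbit: "\<And>n. y (Suc n) = y n v* Amat (\<kappa> n)"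
    and lim: "y \<longlonglongrightarrow> 0"
  shows "(\<forall>n. y n \<in> Qminus) \<or> (\<forall>n. - y n \<in> Qminus)"
proof (cases "\<forall>N. \<exists>n\<ge>N. y n \<in> Qminus")
  case True
  have "y m \<in> Qminus" for m
    using True Amat_orbit_Qminus_backward[where y = y, OF \<kappa> orbit] by (metis le_add_diff_inverse)
  then show ?thesis
    by blast
next
  case False
  then obtain N where N: "\<forall>n\<ge>N. y n \<notin> Qminus"
    by blast
  have orbit': "- y (Suc n) = (- y n) v* Amat (\<kappa> n)" for n
    by (simp add: orbit uminus_vector_matrix_mult)
  have "- y m \<in> Qminus" for m
  proof -
    obtain n where n: "max m N \<le> n" "0 \<le> y n $ 1 * y n $ 2"
      using Amat_orbit_alternating_not_tendsto_zero[where y = y, OF \<kappa> orbit lim, of "max m N"]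
      by (meson not_le)
    then have "- y (m + (n - m)) \<in> Qminus"
      using Amat_orbit_tendsto_zero_Qminus_or_neg[where y = y, OF \<kappa> orbit lim] N by auto
    then show ?thesis
      using Amat_orbit_Qminus_backward[where y = "\<lambda>n. - y n", OF \<kappa> orbit'] by blast
  qed
  then show ?thesis
    by blast
qed

lemma Ws_of_tendsto_zero:
  assumes pos: "\<forall>i\<ge>1. 1 \<le> k i" and lim: "(\<lambda>n. w v* prodA k n) \<longlonglongrightarrow> 0"
  shows "w \<in> Ws k"
proof -
  have "(\<forall>n. w v* prodA k n \<in> Qminus) \<or> (\<forall>n. - (w v* prodA k n) \<in> Qminus)"
    using pos by (intro Amat_orbit_tendsto_zero_Qminus[OF _ vector_matrix_mult_prodA_Suc lim]) auto
  then have "w \<in> (\<Inter>n\<in>{1..}. {x. x v* prodA k n \<in> Qminus}) \<or>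
      - w \<in> (\<Inter>n\<in>{1..}. {x. x v* prodA k n \<in> Qminus})"
    by (auto simp: uminus_vector_matrix_mult)
  then show ?thesis
    unfolding Ws_def by (metis span_base span_neg minus_minus)
qed

section \<open>Integer vectors and rounding errors\<close>

lemma Ints_vector_matrix_mult_Amat_iff:
  fixes x :: "real^3"
  shows "(\<forall>j. (x v* Amat K) $ j \<in> \<int>) \<longleftrightarrow> (\<forall>j. x $ j \<in> \<int>)"
proof
  let ?y = "x v* Amat K"
  have K: "real K - 1 \<in> \<int>"
    by (intro Ints_diff) auto
  assume y: "\<forall>j. ?y $ j \<in> \<int>"
  have "x $ 1 = ?y $ 2 - ?y $ 3"
    by (simp add: algebra_simps)
  with y have x1: "x $ 1 \<in> \<int>"
    by (metis Ints_diff)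
  have "x $ 3 = ?y $ 3 - (real K - 1) * x $ 1"
    by simp
  with y K x1 have "x $ 3 \<in> \<int>"
    by (metis Ints_diff Ints_mult)
  moreover have "x $ 2 \<in> \<int>"
    using y[rule_format, of 1] by simp
  ultimately show "\<forall>j. x $ j \<in> \<int>"
    using x1 by (simp add: forall_3)
next
  assume "\<forall>j. x $ j \<in> \<int>"
  then show "\<forall>j. (x v* Amat K) $ j \<in> \<int>"
    by (simp add: forall_3 Ints_add Ints_mult Ints_diff)
qed

lemma Ints_vector_matrix_mult_prodA_iff:
  fixes x :: "real^3"
  shows "(\<forall>j. (x v* prodA k n) $ j \<in> \<int>) \<longleftrightarrow> (\<forall>j. x $ j \<in> \<int>)"
  by (induction n) (simp_all add: vector_matrix_mult_prodA_Suc Ints_vector_matrix_mult_Amat_iff)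

lemma surj_vector_matrix_mult_prodA: "\<exists>x. x v* prodA k n = (y :: real^3)"
proof (induction n arbitrary: y)
  case (Suc n)
  define y' :: "real^3" where
    "y' = vector [y $ 2 - y $ 3, y $ 1, y $ 3 - (real (k (Suc n)) - 1) * (y $ 2 - y $ 3)]"
  have "y' v* Amat (k (Suc n)) = y"
    by (simp add: vec_eq_iff forall_3 y'_def algebra_simps)
  with Suc show ?case
    by (metis vector_matrix_mult_prodA_Suc)
qed (metis vector_matrix_mul_rid prodA.simps(1))

lemma const_vector_mult_prodA:
  assumes "\<forall>i\<ge>1. 1 \<le> k i"
  shows "vector [c, c, c] v* prodA k n = (vector [c * real (length (comp_subst k n [1])),
      c * real (length (comp_subst k n [2])), c * real (length (comp_subst k n [3]))] :: real^3)"
proof (induction n)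
  case (Suc n)
  let ?len = "\<lambda>m a. real (length (comp_subst k m [a]))"
  have "real (k (Suc n) - 1) = real (k (Suc n)) - 1"
    using assms by (simp add: of_nat_diff)
  then have "?len (Suc n) 1 = ?len n 2"
    and "?len (Suc n) 2 = ?len n 3 + real (k (Suc n)) * ?len n 1"
    and "?len (Suc n) 3 = ?len n 3 + (real (k (Suc n)) - 1) * ?len n 1"
    by (simp_all only: length_comp_subst_Suc of_nat_add of_nat_mult)
  then show ?case
    unfolding vector_matrix_mult_prodA_Suc Suc.IH
    by (simp only: vec_eq_iff forall_3 vector_matrix_mult_Amat vector_3) (simp add: algebra_simps)
qed (simp add: vec_eq_iff forall_3)

definition round_error :: "real^3 \<Rightarrow> real^3" where
  "round_error x = (\<chi> j. x $ j - of_int (round (x $ j)))"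

lemma Ints_diff_round_error: "(x - round_error x) $ j \<in> \<int>"
  by (simp add: round_error_def)

text \<open>The two sides differ by an integer vector whose entries have absolute value below \<open>1\<close>.\<close>
lemma round_error_vector_matrix_mult_Amat:
  fixes x :: "real^3"
  assumes "\<forall>j. \<bar>round_error x $ j\<bar> < 1 / 8" and "real K * \<bar>round_error x $ 1\<bar> < 1 / 8"
    and "\<forall>j. \<bar>round_error (x v* Amat K) $ j\<bar> < 1 / 8"
  shows "round_error (x v* Amat K) = round_error x v* Amat K"
proof -
  define d where "d = round_error (x v* Amat K) - round_error x v* Amat K"
  have "d = (x - round_error x) v* Amat K - (x v* Amat K - round_error (x v* Amat K))"
    by (simp add: d_def vector_matrix_mult_diff_distrib)
  then have "d $ j \<in> \<int>" for j
    using Ints_vector_matrix_mult_Amat_iff[of "x - round_error x" K] Ints_diff_round_error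
    by (simp add: Ints_diff)
  moreover have "\<bar>d $ j\<bar> < 1" for j
  proof -
    have "\<bar>real K * round_error x $ 1\<bar> < 1 / 8"
      using assms(2) by (simp add: abs_mult)
    then have "\<bar>d $ 1\<bar> < 1" "\<bar>d $ 2\<bar> < 1" "\<bar>d $ 3\<bar> < 1"
      using assms(1,3)[rule_format, of 1] assms(1,3)[rule_format, of 2] assms(1,3)[rule_format, of 3]
      by (simp_all add: d_def algebra_simps)
    then show ?thesis
      using exhaust_3[of j] by auto
  qed
  ultimately have "d = 0"
    by (simp add: vec_eq_iff Ints_nonzero_abs_less1)
  then show ?thesis
    by (simp add: d_def)
qed

text \<open>If the orbit of \<open>x\<close> under \<open>A\<^sub>k\<^sub>1, A\<^sub>k\<^sub>2, \<dots>\<close> approaches \<open>\<int>\<^sup>3\<close> fast enough, the rounding errors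
  eventually form an orbit themselves; it tends to \<open>0\<close>, so it starts at a point of \<open>W\<^sup>s(0)\<close>.\<close>
lemma Ws_plus_Ints_of_round_error_small:
  fixes x :: "real^3"
  assumes pos: "\<forall>i\<ge>1. 1 \<le> k i"
    and small: "\<And>\<delta>. 0 < \<delta> \<Longrightarrow> \<forall>\<^sub>F n in sequentially.
      (\<forall>j. \<bar>round_error (x v* prodA k n) $ j\<bar> < \<delta>) \<and>
      real (k (Suc n)) * \<bar>round_error (x v* prodA k n) $ 1\<bar> < \<delta>"
  shows "\<exists>w\<in>Ws k. \<exists>z. (\<forall>j. z $ j \<in> \<int>) \<and> x = w + z"
proof -
  define e where "e n = round_error (x v* prodA k n)" for n
  obtain N where N: "\<forall>n\<ge>N. (\<forall>j. \<bar>e n $ j\<bar> < 1 / 8) \<and> real (k (Suc n)) * \<bar>e n $ 1\<bar> < 1 / 8"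
    using small[of "1 / 8"] unfolding e_def eventually_sequentially by auto
  have e_Suc: "e (Suc n) = e n v* Amat (k (Suc n))" if "N \<le> n" for n
  proof -
    have "\<forall>j. \<bar>e n $ j\<bar> < 1 / 8" "real (k (Suc n)) * \<bar>e n $ 1\<bar> < 1 / 8"
      "\<forall>j. \<bar>e (Suc n) $ j\<bar> < 1 / 8"
      using N that by auto
    then show ?thesis
      unfolding e_def vector_matrix_mult_prodA_Suc by (rule round_error_vector_matrix_mult_Amat)
  qed
  have "e \<longlonglongrightarrow> 0"
  proof (rule vec_tendstoI)
    fix j
    show "(\<lambda>n. e n $ j) \<longlonglongrightarrow> 0 $ j"
      unfolding tendsto_iff dist_real_def
      using small by (simp add: e_def) (metis (mono_tags, lifting) eventually_mono)
  qed
  obtain w where w: "w v* prodA k N = e N"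
    using surj_vector_matrix_mult_prodA by blast
  have "w v* prodA k n = e n" if "N \<le> n" for n
    using that
  proof (induction n rule: dec_induct)
    case (step n)
    then show ?case
      by (simp add: vector_matrix_mult_prodA_Suc e_Suc)
  qed (rule w)
  then have "(\<lambda>n. w v* prodA k n) \<longlonglongrightarrow> 0"
    using \<open>e \<longlonglongrightarrow> 0\<close> by (metis (mono_tags, lifting) eventually_sequentially tendsto_cong)
  then have "w \<in> Ws k"
    by (rule Ws_of_tendsto_zero[OF pos])
  moreover have "\<forall>j. (x - w) $ j \<in> \<int>"
    using Ints_vector_matrix_mult_prodA_iff[of "x - w" k N] Ints_diff_round_error
    by (simp add: vector_matrix_mult_diff_distrib w e_def)
  ultimately show ?thesis
    by (metis add.commute diff_add_cancel)
qed

section \<open>Eigenvalues and rounding errors\<close>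

lemma eventually_return_time_lengths:
  assumes pos: "\<forall>i\<ge>1. 1 \<le> k i" and large: "\<forall>m. \<exists>j. 2 \<le> k (Suc (m + 2 * j))"
  shows "\<forall>\<^sub>F n in sequentially.
    (\<forall>a\<in>{2, 3}. return_time k L (length (comp_subst k n [a]))) \<and>
    (\<forall>i\<le>k (Suc n). return_time k L (i * length (comp_subst k n [1])))"
proof -
  have infinitely: "\<forall>n. \<exists>p>n. 2 \<le> k p"
    using large by (rule large_entries_beyond)
  obtain n0 where n0: "L \<le> length (comp_subst k n0 [3])"
    using length_comp_subst_3_unbounded[OF infinitely] by blast
  have "(\<forall>a\<in>{2, 3}. return_time k L (length (comp_subst k n [a]))) \<and>
    (\<forall>i\<le>k (Suc n). return_time k L (i * length (comp_subst k n [1])))"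
    if "Suc (Suc n0) \<le> n" for n
  proof -
    obtain m where n: "n = Suc (Suc m)" and "n0 \<le> m"
      using \<open>Suc (Suc n0) \<le> n\<close> by (metis Suc_le_D Suc_le_mono)
    then have Lm: "L \<le> length (comp_subst k m [3])"
      using n0 length_comp_subst_3_mono by (metis le_trans)
    show ?thesis
      using factor_at_level_2_pair[OF pos large] factor_at_level_3_pair[OF infinitely]
        return_time_letter_image[OF _ Lm] return_time_multiple[OF _ Lm]
      unfolding n by blast
  qed
  then show ?thesis
    unfolding eventually_sequentially by blast
qed

lemma eigenvalue_round_error_small:
  assumes pos: "\<forall>i\<ge>1. 1 \<le> k i" and large: "\<forall>m. \<exists>j. 2 \<le> k (Suc (m + 2 * j))"
    and eigen: "continuous_eigenvalue (subshiftX k) shift (cis (2 * pi * \<xi>))"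
    and "0 < \<delta>"
  shows "\<forall>\<^sub>F n in sequentially.
    (\<forall>j. \<bar>round_error (vector [\<xi>, \<xi>, \<xi>] v* prodA k n) $ j\<bar> < \<delta>) \<and>
    real (k (Suc n)) * \<bar>round_error (vector [\<xi>, \<xi>, \<xi>] v* prodA k n) $ 1\<bar> < \<delta>"
proof -
  define \<delta>' where "\<delta>' = min \<delta> (1 / 4)"
  have "0 < \<delta>'" "\<delta>' \<le> 1 / 2"
    using \<open>0 < \<delta>\<close> by (auto simp: \<delta>'_def)
  then obtain L where L: "\<And>h. return_time k L h \<Longrightarrow> \<bar>\<xi> * real h - round (\<xi> * real h)\<bar> < \<delta>'"
    using eigenvalue_return_time_near_integer[OF compact_subshiftX[OF large_entries_beyond[OF large]] eigen]
    by blast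
  show ?thesis
    using eventually_return_time_lengths[OF pos large, of L]
  proof (rule eventually_mono)
    fix n
    let ?x = "\<lambda>a. \<xi> * real (length (comp_subst k n [a]))"
    assume returns: "(\<forall>a\<in>{2, 3}. return_time k L (length (comp_subst k n [a]))) \<and>
      (\<forall>i\<le>k (Suc n). return_time k L (i * length (comp_subst k n [1])))"
    then have letters: "\<bar>?x a - round (?x a)\<bar> < \<delta>'" if "a \<in> {2, 3}" for a
      using L that by blast
    have "\<bar>real i * ?x 1 - round (real i * ?x 1)\<bar> < \<delta>'" if "i \<le> k (Suc n)" for i
      using L[of "i * length (comp_subst k n [1])"] returns that by (simp add: mult_ac)
    moreover have K: "1 \<le> k (Suc n)"
      using pos by simp
    ultimately have multiples: "\<forall>i\<le>k (Suc n). \<bar>real i * (?x 1 - round (?x 1))\<bar> < \<delta>'"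
      by (intro abs_diff_round_multiples) (auto simp: \<delta>'_def)
    show "(\<forall>j. \<bar>round_error (vector [\<xi>, \<xi>, \<xi>] v* prodA k n) $ j\<bar> < \<delta>) \<and>
      real (k (Suc n)) * \<bar>round_error (vector [\<xi>, \<xi>, \<xi>] v* prodA k n) $ 1\<bar> < \<delta>"
      using letters[of 2] letters[of 3] multiples[rule_format, of 1] multiples[rule_format, of "k (Suc n)"] K
      by (simp add: const_vector_mult_prodA[OF pos] round_error_def forall_3 abs_mult \<delta>'_def)
  qed
qed

theorem theorem3p8:
  fixes k :: "nat \<Rightarrow> nat" and \<xi> :: real
  assumes pos: "\<forall>i\<ge>1. k i \<ge> 1"
    and even_inf: "infinite {i. i \<ge> 1 \<and> k (2 * i) > 1}"
    and odd_inf: "infinite {i. i \<ge> 1 \<and> k (2 * i - 1) > 1}"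
    and xi: "0 < \<xi>" "\<xi> < 1"
    and notin: "\<not> (\<exists>w\<in>Ws k. \<exists>z::real^3. (\<forall>j. z $ j \<in> \<int>) \<and>
                      vector [\<xi>, \<xi>, \<xi>] = w + z)"
  shows "\<not> continuous_eigenvalue (subshiftX k) shift (exp (2 * pi * \<i> * complex_of_real \<xi>))"
proof
  assume "continuous_eigenvalue (subshiftX k) shift (exp (2 * pi * \<i> * complex_of_real \<xi>))"
  then have eigen: "continuous_eigenvalue (subshiftX k) shift (cis (2 * pi * \<xi>))"
    by (simp add: cis_conv_exp mult_ac)
  have large: "\<forall>m. \<exists>j. 2 \<le> k (Suc (m + 2 * j))"
    using large_entry_of_each_parity[OF even_inf odd_inf] by blast
  have "\<exists>w\<in>Ws k. \<exists>z. (\<forall>j. z $ j \<in> \<int>) \<and> vector [\<xi>, \<xi>, \<xi>] = w + z"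
    using pos eigenvalue_round_error_small[OF pos large eigen]
    by (intro Ws_plus_Ints_of_round_error_small) auto
  with notin show False
    by blast
qed

end
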